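(* Let $X$ be a real Banach space and $A$ a non-empty subset of $X$. Let $\mathsf P$ be any one of: remotal, uniquely remotal, strongly remotal, SUR, USUR, sup-compact. Then $B_X$ has property $\mathsf P$ on $A$ if and only if $S_X$ has property $\mathsf P$ on $A$.
   Context: $B_X,S_X$ are the closed unit ball and unit sphere. For non-empty bounded $F$, $x\in X$, $\delta\ge0$: $r(F,x)=\sup_{y\in F}\|x-y\|$, $Q_F(x,\delta)=\{y\in F:\|x-y\|\ge r(F,x)-\delta\}$, $Q_F(x)=Q_F(x,0)$. On a set $A$, $F$ is: remotal if $Q_F(x)\neq\emptyset$ for each $x\in A$; uniquely remotal if $Q_F(x)$ is a singleton for each $x\in A$; strongly remotal if for every $x\in A$ and $\epsilon>0$ there is $\delta>0$ with $Q_F(x,\delta)\subseteq Q_F(x)+\epsilon B_X$; SUR if uniquely remotal and strongly remotal; USUR if uniquely remotal and for every $\epsilon>0$ there is $\delta>0$ with $Q_F(x,\delta)\subseteq Q_F(x)+\epsilon B_X$ for all $x\in A$; sup-compact if for each $x\in A$ every sequence $(y_n)$ in $F$ with $\|x-y_n\|\to r(F,x)$ has a subsequence converging to an element of $F$. *)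

theory Defs
  imports "HOL-Analysis.Analysis"
begin

definition rad :: "'a::real_normed_vector set \<Rightarrow> 'a \<Rightarrow> real" where
  "rad F x = (SUP y\<in>F. norm (x - y))"

definition Qset :: "'a::real_normed_vector set \<Rightarrow> 'a \<Rightarrow> real \<Rightarrow> 'a set" where
  "Qset F x \<delta> = {y \<in> F. norm (x - y) \<ge> rad F x - \<delta>}"

definition plus_ball :: "'a::real_normed_vector set \<Rightarrow> real \<Rightarrow> 'a set" where
  "plus_ball S \<epsilon> = {q + b | q b. q \<in> S \<and> b \<in> cball 0 \<epsilon>}"

definition remotal_on :: "'a::real_normed_vector set \<Rightarrow> 'a set \<Rightarrow> bool" where
  "remotal_on F A \<longleftrightarrow> (\<forall>x\<in>A. Qset F x 0 \<noteq> {})"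

definition uniquely_remotal_on :: "'a::real_normed_vector set \<Rightarrow> 'a set \<Rightarrow> bool" where
  "uniquely_remotal_on F A \<longleftrightarrow> (\<forall>x\<in>A. \<exists>y. Qset F x 0 = {y})"

definition strongly_remotal_on :: "'a::real_normed_vector set \<Rightarrow> 'a set \<Rightarrow> bool" where
  "strongly_remotal_on F A \<longleftrightarrow>
     (\<forall>x\<in>A. \<forall>\<epsilon>>0. \<exists>\<delta>>0. Qset F x \<delta> \<subseteq> plus_ball (Qset F x 0) \<epsilon>)"

definition SUR_on :: "'a::real_normed_vector set \<Rightarrow> 'a set \<Rightarrow> bool" where
  "SUR_on F A \<longleftrightarrow> uniquely_remotal_on F A \<and> strongly_remotal_on F A"

definition USUR_on :: "'a::real_normed_vector set \<Rightarrow> 'a set \<Rightarrow> bool" where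
  "USUR_on F A \<longleftrightarrow> uniquely_remotal_on F A \<and>
     (\<forall>\<epsilon>>0. \<exists>\<delta>>0. \<forall>x\<in>A. Qset F x \<delta> \<subseteq> plus_ball (Qset F x 0) \<epsilon>)"

definition sup_compact_on :: "'a::real_normed_vector set \<Rightarrow> 'a set \<Rightarrow> bool" where
  "sup_compact_on F A \<longleftrightarrow>
     (\<forall>x\<in>A. \<forall>y::nat \<Rightarrow> 'a. (\<forall>n. y n \<in> F) \<and> ((\<lambda>n. norm (x - y n)) \<longlonglongrightarrow> rad F x)
        \<longrightarrow> (\<exists>s l. strict_mono s \<and> l \<in> F \<and> (y \<circ> s) \<longlonglongrightarrow> l))"

end

theory Submission
  imports Defs
begin

text \<open>
  A point \<open>y\<close> of the ball \<open>B\<^sub>X\<close> lies within \<open>1 - \<parallel>y\<parallel> \<le> (\<parallel>x\<parallel> + 1) - \<parallel>x - y\<parallel>\<close> of the sphere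
  \<open>S\<^sub>X\<close>, and \<open>\<parallel>x\<parallel> + 1\<close> is the farthest distance from \<open>x\<close> to either set. So every point of the
  ball is approximated by a point of the sphere up to its deficit from the farthest distance.
  This alone makes the farthest points of the two sets coincide, puts \<open>\<delta>\<close>-farthest points of
  the ball within \<open>\<delta>\<close> of \<open>2\<delta>\<close>-farthest points of the sphere, and makes maximising sequences in
  the ball asymptotic to maximising sequences in the sphere; each property transfers from these.
\<close>

definition remote_approximating :: "'a::real_normed_vector set \<Rightarrow> 'a set \<Rightarrow> 'a \<Rightarrow> bool" where
  "remote_approximating F G x \<longleftrightarrow> F \<subseteq> G \<and> bounded G \<and>
     (\<forall>g\<in>G. \<exists>f\<in>F. norm (f - g) \<le> rad G x - norm (x - g))"

lemma Qset_mono: "\<delta> \<le> \<delta>' \<Longrightarrow> Qset F x \<delta> \<subseteq> Qset F x \<delta>'"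
  unfolding Qset_def by auto

lemma plus_ball_shift:
  assumes "y' \<in> plus_ball S \<epsilon>" and "norm (y - y') \<le> \<delta>"
  shows "y \<in> plus_ball S (\<epsilon> + \<delta>)"
proof -
  obtain q b where "q \<in> S" "norm b \<le> \<epsilon>" "y' = q + b"
    using assms(1) unfolding plus_ball_def by auto
  moreover have "norm (b + (y - y')) \<le> \<epsilon> + \<delta>"
    using \<open>norm b \<le> \<epsilon>\<close> assms(2) norm_triangle_ineq[of b "y - y'"] by linarith
  ultimately show ?thesis
    unfolding plus_ball_def by (intro CollectI exI[of _ q] exI[of _ "b + (y - y')"]) auto
qed

context
  fixes F G :: "'a::real_normed_vector set" and x :: 'a
  assumes approx: "remote_approximating F G x"
begin

lemma remote_approximating_rad_eq: "rad F x = rad G x"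
proof (cases "G = {}")
  case True
  then show ?thesis using approx unfolding remote_approximating_def by auto
next
  case False
  have "F \<subseteq> G" and "bounded G" using approx unfolding remote_approximating_def by auto
  then obtain b where b: "\<forall>y\<in>G. norm y \<le> b" unfolding bounded_iff by blast
  have bdd_G: "bdd_above ((\<lambda>y. norm (x - y)) ` G)"
  proof (rule bdd_aboveI2)
    fix y assume "y \<in> G"
    then show "norm (x - y) \<le> norm x + b" using b norm_triangle_ineq4[of x y] by fastforce
  qed
  have bdd_F: "bdd_above ((\<lambda>y. norm (x - y)) ` F)"
    using bdd_above_mono[OF bdd_G image_mono[OF \<open>F \<subseteq> G\<close>]] .
  have "F \<noteq> {}" using False approx unfolding remote_approximating_def by blast
  have le: "rad F x \<le> rad G x"
    unfolding rad_def using cSUP_subset_mono[OF \<open>F \<noteq> {}\<close> bdd_G \<open>F \<subseteq> G\<close> order_refl] .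
  have "norm (x - g) \<le> (rad F x + rad G x) / 2" if "g \<in> G" for g
  proof -
    obtain f where "f \<in> F" and fg: "norm (f - g) \<le> rad G x - norm (x - g)"
      using approx \<open>g \<in> G\<close> unfolding remote_approximating_def by blast
    have "norm (x - f) \<le> rad F x"
      unfolding rad_def by (rule cSUP_upper[OF \<open>f \<in> F\<close> bdd_F])
    moreover have "norm (x - g) \<le> norm (x - f) + norm (f - g)"
      using norm_triangle_ineq[of "x - f" "f - g"] by simp
    ultimately show ?thesis using fg by (simp add: field_simps)
  qed
  then have ge: "rad G x \<le> (rad F x + rad G x) / 2"
    by (rule cSUP_least[OF False, of "\<lambda>y. norm (x - y)", folded rad_def])
  from le ge show ?thesis by (simp add: field_simps)
qed

lemma remote_approximating_Qset_subset: "Qset F x \<delta> \<subseteq> Qset G x \<delta>"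
  using approx remote_approximating_rad_eq unfolding remote_approximating_def Qset_def by auto

lemma remote_approximating_farthest_eq: "Qset F x 0 = Qset G x 0"
proof
  show "Qset G x 0 \<subseteq> Qset F x 0"
  proof
    fix g assume g: "g \<in> Qset G x 0"
    then obtain f where "f \<in> F" "norm (f - g) \<le> rad G x - norm (x - g)"
      using approx unfolding remote_approximating_def Qset_def by auto
    moreover have "rad G x \<le> norm (x - g)" using g unfolding Qset_def by simp
    ultimately have "norm (f - g) \<le> 0" by linarith
    then have "f = g" by simp
    with g \<open>f \<in> F\<close> show "g \<in> Qset F x 0"
      unfolding Qset_def remote_approximating_rad_eq by auto
  qed
qed (rule remote_approximating_Qset_subset)

lemma remote_approximating_Qset_approx:
  assumes "g \<in> Qset G x \<delta>"
  shows "\<exists>f\<in>Qset F x (2 * \<delta>). norm (f - g) \<le> \<delta>"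
proof -
  obtain f where "f \<in> F" and fg: "norm (f - g) \<le> rad G x - norm (x - g)"
    using assms approx unfolding remote_approximating_def Qset_def by auto
  have "norm (x - g) \<le> norm (x - f) + norm (f - g)"
    using norm_triangle_ineq[of "x - f" "f - g"] by simp
  with assms fg \<open>f \<in> F\<close> show ?thesis
    unfolding Qset_def remote_approximating_rad_eq by (intro bexI[of _ f]) auto
qed

lemma remote_approximating_Qset_plus_ball:
  assumes "Qset F x \<delta> \<subseteq> plus_ball (Qset F x 0) \<epsilon>"
  shows "Qset G x (min (\<delta> / 2) \<epsilon>) \<subseteq> plus_ball (Qset G x 0) (2 * \<epsilon>)"
proof
  fix g assume "g \<in> Qset G x (min (\<delta> / 2) \<epsilon>)"
  then obtain f where "f \<in> Qset F x (2 * min (\<delta> / 2) \<epsilon>)" and fg: "norm (f - g) \<le> min (\<delta> / 2) \<epsilon>"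
    using remote_approximating_Qset_approx by blast
  moreover have "Qset F x (2 * min (\<delta> / 2) \<epsilon>) \<subseteq> Qset F x \<delta>"
    by (rule Qset_mono) simp
  ultimately have "f \<in> plus_ball (Qset F x 0) \<epsilon>" using assms by blast
  moreover have "norm (g - f) \<le> \<epsilon>" using fg by (simp add: norm_minus_commute)
  ultimately show "g \<in> plus_ball (Qset G x 0) (2 * \<epsilon>)"
    using plus_ball_shift[of f _ \<epsilon> g \<epsilon>] remote_approximating_farthest_eq by simp
qed

lemma remote_approximating_Qset_plus_ball_restrict:
  "Qset G x \<delta> \<subseteq> plus_ball (Qset G x 0) \<epsilon> \<Longrightarrow> Qset F x \<delta> \<subseteq> plus_ball (Qset F x 0) \<epsilon>"
  using remote_approximating_Qset_subset remote_approximating_farthest_eq by auto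

end

context
  fixes F G :: "'a::real_normed_vector set" and A :: "'a set"
  assumes approx: "\<forall>x\<in>A. remote_approximating F G x"
begin

lemma remote_approximating_on_farthest_eq: "x \<in> A \<Longrightarrow> Qset F x 0 = Qset G x 0"
  using approx remote_approximating_farthest_eq by blast

lemma remote_approximating_remotal_on_iff: "remotal_on F A \<longleftrightarrow> remotal_on G A"
  unfolding remotal_on_def using remote_approximating_on_farthest_eq by simp

lemma remote_approximating_uniquely_remotal_on_iff:
  "uniquely_remotal_on F A \<longleftrightarrow> uniquely_remotal_on G A"
  unfolding uniquely_remotal_on_def using remote_approximating_on_farthest_eq by simp

lemma remote_approximating_strongly_remotal_on_iff:
  "strongly_remotal_on F A \<longleftrightarrow> strongly_remotal_on G A"
proof
  assume F_remotal: "strongly_remotal_on F A"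
  show "strongly_remotal_on G A" unfolding strongly_remotal_on_def
  proof (intro ballI allI impI)
    fix x and \<epsilon> :: real assume "x \<in> A" "\<epsilon> > 0"
    then obtain \<delta> where "\<delta> > 0" and \<delta>: "Qset F x \<delta> \<subseteq> plus_ball (Qset F x 0) (\<epsilon> / 2)"
      using F_remotal unfolding strongly_remotal_on_def by (meson half_gt_zero)
    have "Qset G x (min (\<delta> / 2) (\<epsilon> / 2)) \<subseteq> plus_ball (Qset G x 0) \<epsilon>"
      using remote_approximating_Qset_plus_ball[OF _ \<delta>] approx \<open>x \<in> A\<close> by simp
    with \<open>\<delta> > 0\<close> \<open>\<epsilon> > 0\<close> show "\<exists>\<delta>>0. Qset G x \<delta> \<subseteq> plus_ball (Qset G x 0) \<epsilon>"
      by (intro exI[of _ "min (\<delta> / 2) (\<epsilon> / 2)"]) simp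
  qed
next
  assume "strongly_remotal_on G A"
  then show "strongly_remotal_on F A"
    using approx remote_approximating_Qset_plus_ball_restrict
    unfolding strongly_remotal_on_def by metis
qed

lemma remote_approximating_USUR_on_iff: "USUR_on F A \<longleftrightarrow> USUR_on G A"
  unfolding USUR_on_def remote_approximating_uniquely_remotal_on_iff
proof (intro conj_cong refl iffI allI impI)
  fix \<epsilon> :: real
  assume "\<epsilon> > 0" and "\<forall>\<epsilon>>0. \<exists>\<delta>>0. \<forall>x\<in>A. Qset F x \<delta> \<subseteq> plus_ball (Qset F x 0) \<epsilon>"
  then obtain \<delta> where "\<delta> > 0" and \<delta>: "\<forall>x\<in>A. Qset F x \<delta> \<subseteq> plus_ball (Qset F x 0) (\<epsilon> / 2)"
    by (meson half_gt_zero)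
  have "\<forall>x\<in>A. Qset G x (min (\<delta> / 2) (\<epsilon> / 2)) \<subseteq> plus_ball (Qset G x 0) \<epsilon>"
    using remote_approximating_Qset_plus_ball[of F G _ \<delta> "\<epsilon> / 2"] approx \<delta> by simp
  with \<open>\<delta> > 0\<close> \<open>\<epsilon> > 0\<close> show "\<exists>\<delta>>0. \<forall>x\<in>A. Qset G x \<delta> \<subseteq> plus_ball (Qset G x 0) \<epsilon>"
    by (intro exI[of _ "min (\<delta> / 2) (\<epsilon> / 2)"]) simp
next
  fix \<epsilon> :: real
  assume "\<epsilon> > 0" and "\<forall>\<epsilon>>0. \<exists>\<delta>>0. \<forall>x\<in>A. Qset G x \<delta> \<subseteq> plus_ball (Qset G x 0) \<epsilon>"
  then show "\<exists>\<delta>>0. \<forall>x\<in>A. Qset F x \<delta> \<subseteq> plus_ball (Qset F x 0) \<epsilon>"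
    using approx remote_approximating_Qset_plus_ball_restrict by meson
qed

lemma remote_approximating_sup_compact_on_subset:
  assumes "sup_compact_on G A"
  shows "sup_compact_on F A"
  unfolding sup_compact_on_def
proof (intro ballI allI impI)
  fix x and y :: "nat \<Rightarrow> 'a"
  assume "x \<in> A" and y: "(\<forall>n. y n \<in> F) \<and> (\<lambda>n. norm (x - y n)) \<longlonglongrightarrow> rad F x"
  from approx \<open>x \<in> A\<close> have approx_x: "remote_approximating F G x" by blast
  with y have "\<forall>n. y n \<in> G" unfolding remote_approximating_def by blast
  from y have y_lim: "(\<lambda>n. norm (x - y n)) \<longlonglongrightarrow> rad G x"
    unfolding remote_approximating_rad_eq[OF approx_x] by blast
  with \<open>\<forall>n. y n \<in> G\<close> assms \<open>x \<in> A\<close> obtain s l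
    where s: "strict_mono s" "l \<in> G" "(y \<circ> s) \<longlonglongrightarrow> l"
    unfolding sup_compact_on_def by blast
  have "(\<lambda>n. norm (x - (y \<circ> s) n)) \<longlonglongrightarrow> norm (x - l)"
    by (intro tendsto_intros s(3))
  moreover have "(\<lambda>n. norm (x - (y \<circ> s) n)) \<longlonglongrightarrow> rad G x"
    using LIMSEQ_subseq_LIMSEQ[OF y_lim s(1)] by (simp add: o_def)
  ultimately have "l \<in> Qset G x 0"
    using s(2) LIMSEQ_unique unfolding Qset_def by fastforce
  then have "l \<in> F"
    using remote_approximating_on_farthest_eq[OF \<open>x \<in> A\<close>] unfolding Qset_def by blast
  with s show "\<exists>s l. strict_mono s \<and> l \<in> F \<and> (y \<circ> s) \<longlonglongrightarrow> l" by blast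
qed

lemma remote_approximating_sup_compact_on_superset:
  assumes "sup_compact_on F A"
  shows "sup_compact_on G A"
  unfolding sup_compact_on_def
proof (intro ballI allI impI)
  fix x and y :: "nat \<Rightarrow> 'a"
  assume "x \<in> A" and y: "(\<forall>n. y n \<in> G) \<and> (\<lambda>n. norm (x - y n)) \<longlonglongrightarrow> rad G x"
  then have y_lim: "(\<lambda>n. norm (x - y n)) \<longlonglongrightarrow> rad G x" by blast
  from approx \<open>x \<in> A\<close> have approx_x: "remote_approximating F G x" by blast
  with y have "\<forall>n. \<exists>f\<in>F. norm (f - y n) \<le> rad G x - norm (x - y n)"
    unfolding remote_approximating_def by blast
  then obtain f where f: "\<And>n. f n \<in> F" "\<And>n. norm (f n - y n) \<le> rad G x - norm (x - y n)"
    by metis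
  have "(\<lambda>n. rad G x - norm (x - y n)) \<longlonglongrightarrow> 0"
    using tendsto_diff[OF tendsto_const[of "rad G x"] y_lim] by simp
  then have fy: "(\<lambda>n. f n - y n) \<longlonglongrightarrow> 0"
    by (rule Lim_null_comparison[OF always_eventually[OF allI[OF f(2)]]])
  have "norm (norm (x - f n) - norm (x - y n)) \<le> norm (f n - y n)" for n
    using norm_triangle_ineq3[of "x - f n" "x - y n"] by (simp add: norm_minus_commute)
  then have "(\<lambda>n. norm (x - f n) - norm (x - y n)) \<longlonglongrightarrow> 0"
    by (rule Lim_null_comparison[OF always_eventually[OF allI] tendsto_norm_zero[OF fy]])
  from tendsto_add[OF this y_lim] have "(\<lambda>n. norm (x - f n)) \<longlonglongrightarrow> rad F x"
    using remote_approximating_rad_eq[OF approx_x] by simp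
  with assms \<open>x \<in> A\<close> f(1) obtain s l where s: "strict_mono s" "l \<in> F" "(f \<circ> s) \<longlonglongrightarrow> l"
    unfolding sup_compact_on_def by blast
  have "(\<lambda>n. (f \<circ> s) n - ((\<lambda>n. f n - y n) \<circ> s) n) \<longlonglongrightarrow> l - 0"
    by (intro tendsto_diff s(3) LIMSEQ_subseq_LIMSEQ[OF fy s(1)])
  then have "(y \<circ> s) \<longlonglongrightarrow> l" by (simp add: o_def)
  moreover have "l \<in> G" using s(2) approx_x unfolding remote_approximating_def by blast
  ultimately show "\<exists>s l. strict_mono s \<and> l \<in> G \<and> (y \<circ> s) \<longlonglongrightarrow> l" using s(1) by blast
qed

end

lemma exists_unit_vector_scaleR:
  fixes x :: "'a::real_normed_vector"
  assumes "\<exists>z::'a. z \<noteq> 0"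
  shows "\<exists>u. norm u = 1 \<and> x = norm x *\<^sub>R u"
proof (cases "x = 0")
  case True
  obtain z :: 'a where "z \<noteq> 0" using assms by blast
  with True show ?thesis by (intro exI[of _ "sgn z"]) (simp add: norm_sgn)
next
  case False
  then show ?thesis by (intro exI[of _ "sgn x"]) (simp add: norm_sgn sgn_div_norm)
qed

lemma rad_cball:
  fixes x :: "'a::real_normed_vector"
  assumes "\<exists>z::'a. z \<noteq> 0"
  shows "rad (cball 0 1) x = norm x + 1"
  unfolding rad_def
proof (rule cSup_eq_maximum)
  obtain u where u: "norm u = 1" "x = norm x *\<^sub>R u"
    using exists_unit_vector_scaleR[OF assms] by blast
  then have "x - (- u) = (norm x + 1) *\<^sub>R u" by (metis scaleR_add_left scaleR_one diff_minus_eq_add)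
  with u have "norm (x - (- u)) = norm x + 1" by simp
  with u show "norm x + 1 \<in> (\<lambda>y. norm (x - y)) ` cball 0 1"
    by (intro image_eqI[of _ _ "- u"]) auto
next
  fix t assume "t \<in> (\<lambda>y. norm (x - y)) ` cball 0 1"
  then obtain y where "norm y \<le> 1" "t = norm (x - y)" by auto
  then show "t \<le> norm x + 1" using norm_triangle_ineq4[of x y] by linarith
qed

lemma remote_approximating_sphere_cball:
  fixes x :: "'a::real_normed_vector"
  assumes "\<exists>z::'a. z \<noteq> 0"
  shows "remote_approximating (sphere 0 1) (cball 0 1) x"
  unfolding remote_approximating_def rad_cball[OF assms]
proof (intro conjI ballI)
  fix y :: 'a assume "y \<in> cball 0 1"
  obtain u where u: "norm u = 1" "y = norm y *\<^sub>R u"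
    using exists_unit_vector_scaleR[OF assms] by blast
  then have "u - y = (1 - norm y) *\<^sub>R u" by (metis scaleR_diff_left scaleR_one)
  with u \<open>y \<in> cball 0 1\<close> have "norm (u - y) = 1 - norm y" by simp
  also have "\<dots> \<le> norm x + 1 - norm (x - y)" using norm_triangle_ineq4[of x y] by simp
  finally show "\<exists>u\<in>sphere 0 1. norm (u - y) \<le> norm x + 1 - norm (x - y)"
    using u by auto
qed auto

theorem proposition2p15:
  fixes A :: "'a::banach set"
  assumes nontriv: "\<exists>z::'a. z \<noteq> 0"
    and "A \<noteq> {}"
  shows "(remotal_on (cball 0 1) A \<longleftrightarrow> remotal_on (sphere 0 1) A)
       \<and> (uniquely_remotal_on (cball 0 1) A \<longleftrightarrow> uniquely_remotal_on (sphere 0 1) A)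
       \<and> (strongly_remotal_on (cball 0 1) A \<longleftrightarrow> strongly_remotal_on (sphere 0 1) A)
       \<and> (SUR_on (cball 0 1) A \<longleftrightarrow> SUR_on (sphere 0 1) A)
       \<and> (USUR_on (cball 0 1) A \<longleftrightarrow> USUR_on (sphere 0 1) A)
       \<and> (sup_compact_on (cball 0 1) A \<longleftrightarrow> sup_compact_on (sphere 0 1) A)"
proof -
  have approx: "\<forall>x\<in>A. remote_approximating (sphere 0 1) (cball 0 1) x"
    using remote_approximating_sphere_cball[OF nontriv] by blast
  show ?thesis
    using remote_approximating_remotal_on_iff[OF approx]
      remote_approximating_uniquely_remotal_on_iff[OF approx]
      remote_approximating_strongly_remotal_on_iff[OF approx]
      remote_approximating_USUR_on_iff[OF approx]
      remote_approximating_sup_compact_on_subset[OF approx]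
      remote_approximating_sup_compact_on_superset[OF approx]
    unfolding SUR_on_def by blast
qed

end
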